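(* Let $H$ be a graph and $(T,(V_t)_{t\in T})$ a rooted tree-decomposition of $H$ of finite adhesion. Suppose there is an edge $e=ts$ of $T$ with $t<_T s$ and a set $Y\subseteq V_e$ such that $(H\uparrow e)-Y$ has at least two components $C_1,C_2$ with $V(C_1)\cap V_e\neq\emptyset\neq V(C_2)\cap V_e$ and $V(C_2)\cap(V_s\setminus V_e)\neq\emptyset$. Then $(T,(V_t)_{t\in T})$ is not lean.
   Context: A tree-decomposition $(T,(V_t)_{t\in T})$ of $H$ consists of a tree $T$ and bags $V_t\subseteq V(H)$ covering all vertices and edges of $H$ such that for each vertex $v$ the nodes $t$ with $v\in V_t$ form a subtree. For an edge $e=st$ of $T$, $V_e:=V_s\cap V_t$ is its adhesion set; the decomposition has finite adhesion if all $V_e$ are finite. In a rooted tree-decomposition, $T$ has a root $r$ and $\le_T$ is the tree-order ($s\le_T t$ iff $s$ lies on the $r$–$t$ path in $T$). For an edge $e$ of $T$, $T_e$ is the component of $T-e$ not containing $r$, and $H\uparrow e$ is the subgraph of $H$ induced on $\bigcup_{u\in T_e}V_u$. The tree-decomposition is lean if for every two (not necessarily distinct) nodes $s,t$ and all $Z_s\subseteq V_s$, $Z_t\subseteq V_t$ with $|Z_s|=|Z_t|=:\ell\in\mathbb N$, either $H$ contains $\ell$ pairwise disjoint $Z_s$–$Z_t$ paths or some edge $e$ of the $s$–$t$ path in $T$ has $|V_e|<\ell$. *)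

theory Defs
  imports Main
begin

definition graph :: "'v set \<Rightarrow> ('v \<Rightarrow> 'v \<Rightarrow> bool) \<Rightarrow> bool" where
  "graph V E \<longleftrightarrow> (\<forall>x y. E x y \<longrightarrow> x \<in> V \<and> y \<in> V \<and> E y x \<and> x \<noteq> y)"

definition path_in :: "('v \<Rightarrow> 'v \<Rightarrow> bool) \<Rightarrow> 'v set \<Rightarrow> 'v list \<Rightarrow> bool" where
  "path_in E W xs \<longleftrightarrow> xs \<noteq> [] \<and> distinct xs \<and> set xs \<subseteq> W \<and>
     (\<forall>i. Suc i < length xs \<longrightarrow> E (xs ! i) (xs ! Suc i))"

definition reachable :: "('v \<Rightarrow> 'v \<Rightarrow> bool) \<Rightarrow> 'v set \<Rightarrow> 'v \<Rightarrow> 'v \<Rightarrow> bool" where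
  "reachable E W x y \<longleftrightarrow> (\<exists>xs. path_in E W xs \<and> hd xs = x \<and> last xs = y)"

definition connected_set :: "('v \<Rightarrow> 'v \<Rightarrow> bool) \<Rightarrow> 'v set \<Rightarrow> bool" where
  "connected_set E W \<longleftrightarrow> (\<forall>x\<in>W. \<forall>y\<in>W. reachable E W x y)"

definition component_of :: "('v \<Rightarrow> 'v \<Rightarrow> bool) \<Rightarrow> 'v set \<Rightarrow> 'v set \<Rightarrow> bool" where
  "component_of E W C \<longleftrightarrow> (\<exists>x\<in>W. C = {y. reachable E W x y})"

definition tree :: "'n set \<Rightarrow> ('n \<Rightarrow> 'n \<Rightarrow> bool) \<Rightarrow> bool" where
  "tree N F \<longleftrightarrow> graph N F \<and> N \<noteq> {} \<and> connected_set F N \<and>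
     \<not> (\<exists>xs. path_in F N xs \<and> 3 \<le> length xs \<and> F (last xs) (hd xs))"

definition tree_decomp ::
  "'v set \<Rightarrow> ('v \<Rightarrow> 'v \<Rightarrow> bool) \<Rightarrow> 'n set \<Rightarrow> ('n \<Rightarrow> 'n \<Rightarrow> bool) \<Rightarrow> ('n \<Rightarrow> 'v set) \<Rightarrow> bool" where
  "tree_decomp V E N F B \<longleftrightarrow> tree N F \<and> (\<forall>t\<in>N. B t \<subseteq> V) \<and>
     (\<forall>v\<in>V. \<exists>t\<in>N. v \<in> B t) \<and>
     (\<forall>x y. E x y \<longrightarrow> (\<exists>t\<in>N. x \<in> B t \<and> y \<in> B t)) \<and>
     (\<forall>v. connected_set F {t\<in>N. v \<in> B t})"

definition adhesion :: "('n \<Rightarrow> 'v set) \<Rightarrow> 'n \<Rightarrow> 'n \<Rightarrow> 'v set" where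
  "adhesion B s t = B s \<inter> B t"

definition finite_adhesion :: "('n \<Rightarrow> 'n \<Rightarrow> bool) \<Rightarrow> ('n \<Rightarrow> 'v set) \<Rightarrow> bool" where
  "finite_adhesion F B \<longleftrightarrow> (\<forall>s t. F s t \<longrightarrow> finite (adhesion B s t))"

definition tree_le :: "'n set \<Rightarrow> ('n \<Rightarrow> 'n \<Rightarrow> bool) \<Rightarrow> 'n \<Rightarrow> 'n \<Rightarrow> 'n \<Rightarrow> bool" where
  "tree_le N F r s t \<longleftrightarrow> (\<exists>P. path_in F N P \<and> hd P = r \<and> last P = t \<and> s \<in> set P)"

definition del_edge :: "('n \<Rightarrow> 'n \<Rightarrow> bool) \<Rightarrow> 'n \<Rightarrow> 'n \<Rightarrow> ('n \<Rightarrow> 'n \<Rightarrow> bool)" where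
  "del_edge F t s = (\<lambda>x y. F x y \<and> {x, y} \<noteq> {t, s})"

text \<open>T_e: the component of T - e not containing the root r.\<close>
definition up_nodes :: "'n set \<Rightarrow> ('n \<Rightarrow> 'n \<Rightarrow> bool) \<Rightarrow> 'n \<Rightarrow> 'n \<Rightarrow> 'n \<Rightarrow> 'n set" where
  "up_nodes N F r t s =
     (if reachable (del_edge F t s) N s r then {u. reachable (del_edge F t s) N t u}
      else {u. reachable (del_edge F t s) N s u})"

text \<open>Vertex set of H\<up>e (the subgraph of H induced on this set).\<close>
definition up_vertices ::
  "'n set \<Rightarrow> ('n \<Rightarrow> 'n \<Rightarrow> bool) \<Rightarrow> ('n \<Rightarrow> 'v set) \<Rightarrow> 'n \<Rightarrow> 'n \<Rightarrow> 'n \<Rightarrow> 'v set" where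
  "up_vertices N F B r t s = (\<Union>u\<in>up_nodes N F r t s. B u)"

definition disjoint_paths ::
  "'v set \<Rightarrow> ('v \<Rightarrow> 'v \<Rightarrow> bool) \<Rightarrow> 'v set \<Rightarrow> 'v set \<Rightarrow> nat \<Rightarrow> bool" where
  "disjoint_paths V E Zs Zt l \<longleftrightarrow> (\<exists>P :: nat \<Rightarrow> 'v list.
     (\<forall>i<l. path_in E V (P i) \<and> set (P i) \<inter> Zs = {hd (P i)} \<and> set (P i) \<inter> Zt = {last (P i)}) \<and>
     (\<forall>i<l. \<forall>j<l. i \<noteq> j \<longrightarrow> set (P i) \<inter> set (P j) = {}))"

definition lean ::
  "'v set \<Rightarrow> ('v \<Rightarrow> 'v \<Rightarrow> bool) \<Rightarrow> 'n set \<Rightarrow> ('n \<Rightarrow> 'n \<Rightarrow> bool) \<Rightarrow> ('n \<Rightarrow> 'v set) \<Rightarrow> bool" where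
  "lean V E N F B \<longleftrightarrow> (\<forall>s\<in>N. \<forall>t\<in>N. \<forall>Zs Zt l.
     Zs \<subseteq> B s \<longrightarrow> Zt \<subseteq> B t \<longrightarrow> finite Zs \<longrightarrow> finite Zt \<longrightarrow> card Zs = l \<longrightarrow> card Zt = l \<longrightarrow>
     disjoint_paths V E Zs Zt l \<or>
     (\<exists>P i. path_in F N P \<and> hd P = s \<and> last P = t \<and> Suc i < length P \<and>
        finite (adhesion B (P ! i) (P ! Suc i)) \<and> card (adhesion B (P ! i) (P ! Suc i)) < l))"

end

theory Submission
  imports Defs
begin

text \<open>Pick x in C2 \<inter> (V_s - V_e) and y in C1 \<inter> V_e. The sets Z = (V_e - {y}) \<union> {x} and V_e
lie in the single bag V_s and have the same size, and the trivial s--s path in T has no edge, so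
leanness yields |V_e| disjoint Z--V_e paths. The one starting at x must end in y and avoids V_e
before that; as V_e separates H\<up>e from the rest of H, this path runs inside (H\<up>e) - Y and joins
C2 to C1.\<close>

definition induced_adj :: "('v \<Rightarrow> 'v \<Rightarrow> bool) \<Rightarrow> 'v set \<Rightarrow> 'v \<Rightarrow> 'v \<Rightarrow> bool" where
  "induced_adj E W a b \<longleftrightarrow> E a b \<and> a \<in> W \<and> b \<in> W"

lemma path_in_rtranclp:
  assumes "path_in E W xs"
  shows "(induced_adj E W)\<^sup>*\<^sup>* (hd xs) (last xs)"
proof -
  have "(induced_adj E W)\<^sup>*\<^sup>* (hd xs) (xs ! j)" if "j < length xs" for j
    using that
  proof (induction j)
    case 0
    then show ?case by (cases xs) auto
  next
    case (Suc j)
    then have "induced_adj E W (xs ! j) (xs ! Suc j)"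
      using assms unfolding path_in_def induced_adj_def by (auto dest: nth_mem)
    with Suc show ?case by (meson Suc_lessD rtranclp.rtrancl_into_rtrancl)
  qed
  moreover have "xs \<noteq> []" using assms by (simp add: path_in_def)
  ultimately show ?thesis by (simp add: last_conv_nth)
qed

lemma path_in_take:
  assumes "path_in E W xs" "0 < n"
  shows "path_in E W (take n xs)"
  using assms unfolding path_in_def by (auto dest: in_set_takeD)

lemma path_in_snoc:
  assumes "path_in E W xs" "z \<in> W" "z \<notin> set xs" "E (last xs) z"
  shows "path_in E W (xs @ [z])"
  unfolding path_in_def
proof (intro conjI allI impI)
  fix j assume j: "Suc j < length (xs @ [z])"
  have "xs \<noteq> []" using assms(1) by (simp add: path_in_def)
  show "E ((xs @ [z]) ! j) ((xs @ [z]) ! Suc j)"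
  proof (cases "Suc j < length xs")
    case True
    then show ?thesis using assms(1) by (simp add: path_in_def nth_append)
  next
    case False
    then have "j = length xs - 1" using j by simp
    then show ?thesis using assms(4) \<open>xs \<noteq> []\<close> by (simp add: nth_append last_conv_nth)
  qed
qed (use assms in \<open>auto simp: path_in_def\<close>)

lemma reachable_if_rtranclp:
  assumes "(induced_adj E W)\<^sup>*\<^sup>* x y" "x \<in> W"
  shows "reachable E W x y"
  using assms(1)
proof (induction rule: rtranclp_induct)
  case base
  have "path_in E W [x]" using assms(2) by (simp add: path_in_def)
  then show ?case unfolding reachable_def by force
next
  case (step y z)
  then obtain xs where xs: "path_in E W xs" "hd xs = x" "last xs = y"
    unfolding reachable_def by blast
  show ?case
  proof (cases "z \<in> set xs")
    case True
    then obtain i where "i < length xs" "xs ! i = z" by (meson in_set_conv_nth)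
    then show ?thesis
      using path_in_take[OF xs(1), of "Suc i"] xs(2) unfolding reachable_def
      by (metis hd_take last_snoc take_Suc_conv_app_nth zero_less_Suc)
  next
    case False
    have "xs \<noteq> []" using xs(1) by (simp add: path_in_def)
    then show ?thesis
      using path_in_snoc[OF xs(1) _ False] step.hyps(2) xs unfolding reachable_def induced_adj_def
      by (metis hd_append2 last_snoc)
  qed
qed

lemma reachable_iff_rtranclp:
  assumes "x \<in> W"
  shows "reachable E W x y \<longleftrightarrow> (induced_adj E W)\<^sup>*\<^sup>* x y"
  using assms path_in_rtranclp reachable_if_rtranclp unfolding reachable_def by metis

lemma component_of_subset:
  assumes "component_of E W C"
  shows "C \<subseteq> W"
  using assms unfolding component_of_def reachable_def path_in_def
  by (force dest: last_in_set)

lemma component_of_eqI: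
  assumes "graph V E" "component_of E W C" "component_of E W C'"
    and "x \<in> C" "y \<in> C'" "reachable E W x y"
  shows "C = C'"
proof -
  let ?R = "(induced_adj E W)\<^sup>*\<^sup>*"
  have "symp (induced_adj E W)"
    using assms(1) unfolding graph_def induced_adj_def by (auto intro: sympI)
  then have sym_R: "?R v u" if "?R u v" for u v
    by (rule sympD[OF symp_rtranclp that])
  have comp_class: "D = {v. ?R z v}" if comp: "component_of E W D" and "z \<in> D" for D z
  proof -
    obtain a where a: "a \<in> W" "D = {v. reachable E W a v}"
      using comp unfolding component_of_def by blast
    then have D: "D = {v. ?R a v}" by (simp add: reachable_iff_rtranclp)
    with \<open>z \<in> D\<close> have "?R a z" by simp
    then have "?R a v \<longleftrightarrow> ?R z v" for v
      using sym_R rtranclp_trans by metis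
    then show ?thesis using D by blast
  qed
  have "x \<in> W" using assms(2,4) component_of_subset by blast
  then have "?R x y" using assms(6) by (simp add: reachable_iff_rtranclp)
  then have "?R x v \<longleftrightarrow> ?R y v" for v
    using sym_R rtranclp_trans by metis
  then show ?thesis using comp_class[OF assms(2,4)] comp_class[OF assms(3,5)] by blast
qed

lemma path_in_restrict:
  assumes "path_in E V xs" "hd xs \<in> W"
    and step: "\<And>j. Suc j < length xs \<Longrightarrow> xs ! j \<in> W \<Longrightarrow> xs ! Suc j \<in> W"
  shows "path_in E W xs"
proof -
  have ne: "xs \<noteq> []" using assms(1) by (simp add: path_in_def)
  have "xs ! j \<in> W" if "j < length xs" for j
    using that
  proof (induction j)
    case 0
    then show ?case using assms(2) ne by (simp add: hd_conv_nth)
  next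
    case (Suc j)
    then show ?case using step by simp
  qed
  then have "set xs \<subseteq> W" by (auto simp: in_set_conv_nth)
  then show ?thesis using assms(1) by (simp add: path_in_def)
qed

lemma up_nodes_closed:
  assumes "a \<in> up_nodes N F r t s" "F a b" "b \<in> N" "{a, b} \<noteq> {t, s}"
  shows "b \<in> up_nodes N F r t s"
proof -
  obtain z where z: "up_nodes N F r t s = {u. reachable (del_edge F t s) N z u}"
    unfolding up_nodes_def by (cases "reachable (del_edge F t s) N s r") auto
  have ra: "reachable (del_edge F t s) N z a" using z assms(1) by auto
  then have zN: "z \<in> N" "a \<in> N"
    unfolding reachable_def path_in_def by (auto dest: hd_in_set last_in_set)
  have "(induced_adj (del_edge F t s) N)\<^sup>*\<^sup>* z a"
    using ra by (simp add: reachable_iff_rtranclp[OF zN(1)])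
  moreover have "induced_adj (del_edge F t s) N a b"
    using assms zN unfolding induced_adj_def del_edge_def by auto
  ultimately have "(induced_adj (del_edge F t s) N)\<^sup>*\<^sup>* z b" by simp
  then show ?thesis by (simp add: z reachable_iff_rtranclp[OF zN(1)])
qed

text \<open>The adhesion set V_e separates H\<up>e from the rest of H: the nodes whose bags contain a vertex
u outside V_e form a subtree avoiding the edge e, so they all lie on the side of T_e once one does.\<close>

lemma up_vertices_closed_outside_adhesion:
  assumes td: "tree_decomp V E N F B" and "E u v"
    and u: "u \<in> up_vertices N F B r t s" "u \<notin> adhesion B t s"
  shows "v \<in> up_vertices N F B r t s"
proof -
  let ?U = "up_nodes N F r t s" and ?S = "{x \<in> N. u \<in> B x}"
  obtain a where a: "a \<in> ?U" "u \<in> B a" using u(1) unfolding up_vertices_def by auto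
  obtain w where w: "w \<in> N" "u \<in> B w" "v \<in> B w"
    using td \<open>E u v\<close> unfolding tree_decomp_def by blast
  have "a \<in> N" using a(1) unfolding up_nodes_def reachable_def path_in_def
    by (auto split: if_splits dest: last_in_set)
  then have aS: "a \<in> ?S" using a(2) by simp
  with w td have "reachable F ?S a w" unfolding tree_decomp_def connected_set_def by simp
  then have "(induced_adj F ?S)\<^sup>*\<^sup>* a w" by (rule reachable_iff_rtranclp[OF aS, THEN iffD1])
  then have "w \<in> ?U"
  proof (induction rule: rtranclp_induct)
    case base
    then show ?case using a by simp
  next
    case (step c d)
    then have cd: "F c d" "d \<in> N" "u \<in> B c" "u \<in> B d"
      unfolding induced_adj_def by simp_all
    then have "{c, d} \<noteq> {t, s}" using u(2) unfolding adhesion_def doubleton_eq_iff by auto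
    then show ?case by (rule up_nodes_closed[OF step.IH cd(1,2)])
  qed
  then show ?thesis using w unfolding up_vertices_def by blast
qed

lemma path_in_up_vertices:
  assumes "tree_decomp V E N F B" "path_in E V xs" "hd xs \<in> up_vertices N F B r t s"
    and "set (butlast xs) \<inter> adhesion B t s = {}"
  shows "path_in E (up_vertices N F B r t s) xs"
proof (rule path_in_restrict[OF assms(2,3)])
  fix j assume j: "Suc j < length xs" "xs ! j \<in> up_vertices N F B r t s"
  have "xs ! j \<in> set (butlast xs)" using j(1) by (simp add: nth_butlast[symmetric])
  then have "xs ! j \<notin> adhesion B t s" using assms(4) by blast
  moreover have "E (xs ! j) (xs ! Suc j)" using assms(2) j(1) by (simp add: path_in_def)
  ultimately show "xs ! Suc j \<in> up_vertices N F B r t s"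
    using up_vertices_closed_outside_adhesion[OF assms(1)] j(2) by blast
qed

lemma lean_at_node:
  assumes "lean V E N F B" "s \<in> N" "Zs \<subseteq> B s" "Zt \<subseteq> B s"
    and "finite Zs" "finite Zt" "card Zs = card Zt"
  shows "disjoint_paths V E Zs Zt (card Zt)"
proof -
  have "\<not> (path_in F N P \<and> hd P = s \<and> last P = s \<and> Suc i < length P)" for P i
  proof
    assume P: "path_in F N P \<and> hd P = s \<and> last P = s \<and> Suc i < length P"
    then have "P ! 0 = P ! (length P - 1)" "distinct P"
      by (auto simp: hd_conv_nth last_conv_nth path_in_def)
    then show False using P nth_eq_iff_index_eq by fastforce
  qed
  moreover note assms(1)[unfolded lean_def, rule_format, OF assms(2,2,3,4,5,6,7) refl]
  ultimately show ?thesis by blast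
qed

lemma disjoint_paths_path_from:
  assumes "disjoint_paths V E Zs Zt (card Zs)" "finite Zs" "x \<in> Zs"
  obtains xs where "path_in E V xs" "hd xs = x" "set xs \<inter> Zs = {x}" "set xs \<inter> Zt = {last xs}"
proof -
  let ?l = "card Zs"
  obtain P where P: "\<forall>i<?l. path_in E V (P i) \<and> set (P i) \<inter> Zs = {hd (P i)} \<and>
      set (P i) \<inter> Zt = {last (P i)}"
    and disj: "\<forall>i<?l. \<forall>j<?l. i \<noteq> j \<longrightarrow> set (P i) \<inter> set (P j) = {}"
    using assms(1) unfolding disjoint_paths_def by (elim exE conjE)
  have hd: "hd (P i) \<in> set (P i) \<inter> Zs" if "i < ?l" for i
    using P that by blast
  have "inj_on (\<lambda>i. hd (P i)) {..<?l}"
  proof (rule inj_onI)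
    fix i j assume "i \<in> {..<?l}" "j \<in> {..<?l}" "hd (P i) = hd (P j)"
    then show "i = j" using hd[of i] hd[of j] disj by auto
  qed
  moreover have "(\<lambda>i. hd (P i)) ` {..<?l} \<subseteq> Zs" using hd by blast
  ultimately have "(\<lambda>i. hd (P i)) ` {..<?l} = Zs"
    using assms(2) by (simp add: card_image card_subset_eq)
  with assms(3) obtain i where i: "i < ?l" "hd (P i) = x" by (metis imageE lessThan_iff)
  with P have "path_in E V (P i) \<and> set (P i) \<inter> Zs = {x} \<and> set (P i) \<inter> Zt = {last (P i)}"
    by simp
  with i(2) show ?thesis using that by blast
qed

lemma exchanged_linkage_path:
  assumes "distinct xs" "x \<notin> A"
    and "set xs \<inter> insert x (A - {y}) = {x}" "set xs \<inter> A = {last xs}"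
  shows "last xs = y" "set (butlast xs) \<inter> A = {}"
proof -
  have last: "last xs \<in> set xs" "last xs \<in> A" using assms(4) by blast+
  show "last xs = y"
  proof (rule ccontr)
    assume "last xs \<noteq> y"
    with last have "last xs \<in> set xs \<inter> insert x (A - {y})" by blast
    with assms(2,3) last(2) show False by auto
  qed
  have "xs \<noteq> []" using last(1) by auto
  with assms(1) have "distinct (butlast xs @ [last xs])" by simp
  then have "last xs \<notin> set (butlast xs)" by simp
  moreover have "set xs \<inter> A \<subseteq> {last xs}" using assms(4) by simp
  ultimately show "set (butlast xs) \<inter> A = {}" by (blast dest: in_set_butlastD)
qed

theorem lemma3p4:
  fixes V :: "'v set" and E :: "'v \<Rightarrow> 'v \<Rightarrow> bool"
    and N :: "'n set" and F :: "'n \<Rightarrow> 'n \<Rightarrow> bool" and B :: "'n \<Rightarrow> 'v set"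
    and r t s :: 'n and Y C1 C2 :: "'v set"
  assumes "graph V E"
    and "tree_decomp V E N F B"
    and "r \<in> N"
    and "finite_adhesion F B"
    and "F t s"
    and "tree_le N F r t s" and "t \<noteq> s"
    and "Y \<subseteq> adhesion B t s"
    and "component_of E (up_vertices N F B r t s - Y) C1"
    and "component_of E (up_vertices N F B r t s - Y) C2"
    and "C1 \<noteq> C2"
    and "C1 \<inter> adhesion B t s \<noteq> {}"
    and "C2 \<inter> adhesion B t s \<noteq> {}"
    and "C2 \<inter> (B s - adhesion B t s) \<noteq> {}"
  shows "\<not> lean V E N F B"
proof
  assume lean: "lean V E N F B"
  let ?Ve = "adhesion B t s" and ?U = "up_vertices N F B r t s"
  obtain x where x: "x \<in> C2" "x \<in> B s" "x \<notin> ?Ve" using assms(14) by blast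
  obtain y where y: "y \<in> C1" "y \<in> ?Ve" using assms(12) by blast
  have fin: "finite ?Ve" using assms(4,5) unfolding finite_adhesion_def by blast
  define Z where "Z = insert x (?Ve - {y})"
  have "card ?Ve > 0" using fin y(2) card_gt_0_iff by blast
  then have Z: "finite Z" "x \<in> Z" "Z \<subseteq> B s" "?Ve \<subseteq> B s" "card Z = card ?Ve"
    using fin x y by (auto simp: Z_def adhesion_def card_Diff_singleton)
  have "s \<in> N" using assms(2,5) unfolding tree_decomp_def tree_def graph_def by blast
  then have linkage: "disjoint_paths V E Z ?Ve (card Z)"
    using lean_at_node[OF lean _ Z(3,4,1) fin Z(5)] Z(5) by simp
  obtain xs where xs: "path_in E V xs" "hd xs = x" "set xs \<inter> Z = {x}" "set xs \<inter> ?Ve = {last xs}"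
    by (rule disjoint_paths_path_from[OF linkage Z(1,2)])
  have "distinct xs" using xs(1) by (simp add: path_in_def)
  note y_end = exchanged_linkage_path[OF this x(3) xs(3)[unfolded Z_def] xs(4)]
  have "x \<in> ?U - Y" "y \<in> ?U - Y"
    using x(1) y(1) component_of_subset[OF assms(9)] component_of_subset[OF assms(10)] by blast+
  then have "path_in E ?U xs" using path_in_up_vertices[OF assms(2) xs(1)] xs(2) y_end(2) by simp
  moreover have "set xs \<inter> Y = {}"
    using equalityD1[OF xs(4)] assms(8) y_end(1) \<open>y \<in> ?U - Y\<close> by blast
  ultimately have "reachable E (?U - Y) x y"
    using xs(2) y_end(1) unfolding reachable_def path_in_def by blast
  then have "C2 = C1" by (rule component_of_eqI[OF assms(1,10,9) x(1) y(1)])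
  with assms(11) show False by simp
qed

end
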